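(* Let $(X,P,o)$ be a generalized parametric metric space such that $P$ satisfies (P5) and $o$ is continuous. Then $(X,\tau_P)$ is a $T_1$ space: for any distinct $x,y\in X$ there are $U,V\in\tau_P$ with $x\in U$, $y\notin U$, $y\in V$, $x\notin V$.
   Context: A binary operation $o:[0,\infty)\times[0,\infty)\to[0,\infty)$ (written $\alpha\, o\, \beta$) is assumed to satisfy, for all $\alpha,\beta,\gamma\in[0,\infty)$: (a) $\alpha\, o\, 0=\alpha$; (b) $\alpha\le\beta\implies \alpha\, o\,\gamma\le\beta\, o\,\gamma$; (c) $\alpha\, o\,\gamma=\gamma\, o\,\alpha$; (d) $\alpha\, o\,(\beta\, o\,\gamma)=(\alpha\, o\,\beta)\, o\,\gamma$. It is continuous if whenever $\alpha_n\to\alpha$ and $\beta_n\to\beta$ in $[0,\infty)$ we have $\alpha_n\, o\,\beta_n\to\alpha\, o\,\beta$. A generalized parametric metric on a nonempty set $X$ is a function $P:X\times X\times(0,\infty)\to[0,\infty)$ such that: (P1) $P(a,b,t)=0$ for all $t>0$ if and only if $a=b$; (P2) $P(a,b,t)=P(b,a,t)$ for all $a,b\in X$, $t>0$; (P3) $P(a,b,s+t)\le P(a,x,s)\, o\, P(b,x,t)$ for all $s,t>0$ and $a,b,x\in X$. The triple $(X,P,o)$ is a generalized parametric metric space. Condition (P5): for all $a,b\in X$, the map $t\mapsto P(a,b,t)$ is continuous on $(0,\infty)$. Open ball: $B(a,\alpha,t)=\{b\in X: P(a,b,t)<\alpha\}$. $\tau_P$ is the topology consisting of all $A\subseteq X$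 such that for every $a\in A$ there exist $\alpha>0,t>0$ with $B(a,\alpha,t)\subseteq A$. *)

theory Defs
  imports "HOL-Analysis.Analysis"
begin

text \<open>A binary operation f on [0,\<infinity>), represented as a real function whose behaviour
  is only relevant on nonnegative arguments (it must map them into [0,\<infinity>)).\<close>
definition binop_ok :: "(real \<Rightarrow> real \<Rightarrow> real) \<Rightarrow> bool" where
  "binop_ok f \<longleftrightarrow>
     (\<forall>a\<ge>0. \<forall>b\<ge>0. f a b \<ge> 0) \<and>
     (\<forall>a\<ge>0. f a 0 = a) \<and>
     (\<forall>a\<ge>0. \<forall>b\<ge>0. \<forall>c\<ge>0. a \<le> b \<longrightarrow> f a c \<le> f b c) \<and>
     (\<forall>a\<ge>0. \<forall>c\<ge>0. f a c = f c a) \<and>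
     (\<forall>a\<ge>0. \<forall>b\<ge>0. \<forall>c\<ge>0. f a (f b c) = f (f a b) c)"

definition binop_continuous :: "(real \<Rightarrow> real \<Rightarrow> real) \<Rightarrow> bool" where
  "binop_continuous f \<longleftrightarrow>
     (\<forall>A B a b. (\<forall>n. A n \<ge> 0) \<longrightarrow> (\<forall>n. B n \<ge> 0) \<longrightarrow> a \<ge> 0 \<longrightarrow> b \<ge> 0 \<longrightarrow>
        A \<longlonglongrightarrow> a \<longrightarrow> B \<longlonglongrightarrow> b \<longrightarrow> (\<lambda>n. f (A n) (B n)) \<longlonglongrightarrow> f a b)"

text \<open>Generalized parametric metric; P is only meaningful for t > 0.\<close>
definition gen_param_metric :: "('a \<Rightarrow> 'a \<Rightarrow> real \<Rightarrow> real) \<Rightarrow> (real \<Rightarrow> real \<Rightarrow> real) \<Rightarrow> bool" where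
  "gen_param_metric P f \<longleftrightarrow> binop_ok f \<and>
     (\<forall>a b t. t > 0 \<longrightarrow> P a b t \<ge> 0) \<and>
     (\<forall>a b. (\<forall>t>0. P a b t = 0) \<longleftrightarrow> a = b) \<and>
     (\<forall>a b t. t > 0 \<longrightarrow> P a b t = P b a t) \<and>
     (\<forall>a b x s t. s > 0 \<longrightarrow> t > 0 \<longrightarrow> P a b (s + t) \<le> f (P a x s) (P b x t))"

definition P5 :: "('a \<Rightarrow> 'a \<Rightarrow> real \<Rightarrow> real) \<Rightarrow> bool" where
  "P5 P \<longleftrightarrow> (\<forall>a b. continuous_on {0<..} (P a b))"

definition pball :: "('a \<Rightarrow> 'a \<Rightarrow> real \<Rightarrow> real) \<Rightarrow> 'a \<Rightarrow> real \<Rightarrow> real \<Rightarrow> 'a set" where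
  "pball P a \<alpha> t = {b. P a b t < \<alpha>}"

definition tauP :: "('a \<Rightarrow> 'a \<Rightarrow> real \<Rightarrow> real) \<Rightarrow> 'a set set" where
  "tauP P = {A. \<forall>a\<in>A. \<exists>\<alpha>>0. \<exists>t>0. pball P a \<alpha> t \<subseteq> A}"

end

theory Submission
  imports Defs
begin

text \<open>Complements of singletons are \<open>\<tau>\<^sub>P\<close>-open: if \<open>a \<noteq> y\<close>, (P1) gives some \<open>t > 0\<close>
  with \<open>P a y t > 0\<close>, and the ball of that radius around \<open>a\<close> at parameter \<open>t\<close> misses \<open>y\<close>.\<close>

lemma Compl_singleton_in_tauP:
  assumes nonneg: "\<And>a b t. t > 0 \<Longrightarrow> P a b t \<ge> 0"
    and separates: "\<And>a b. (\<forall>t>0. P a b t = 0) \<longleftrightarrow> a = b"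
  shows "- {y} \<in> tauP P"
  unfolding tauP_def
proof (intro CollectI ballI)
  fix a assume "a \<in> - {y}"
  then obtain t where "t > 0" and "P a y t \<noteq> 0"
    using separates[of a y] by blast
  then have "P a y t > 0"
    using nonneg by (simp add: order_less_le)
  moreover have "pball P a (P a y t) t \<subseteq> - {y}"
    unfolding pball_def by auto
  ultimately show "\<exists>\<alpha>>0. \<exists>t>0. pball P a \<alpha> t \<subseteq> - {y}"
    using \<open>t > 0\<close> by blast
qed

theorem mainTheorem9:
  fixes P :: "'a \<Rightarrow> 'a \<Rightarrow> real \<Rightarrow> real" and f :: "real \<Rightarrow> real \<Rightarrow> real"
  assumes "gen_param_metric P f" and "P5 P" and "binop_continuous f"
  shows "\<forall>x y. x \<noteq> y \<longrightarrow> (\<exists>U\<in>tauP P. \<exists>V\<in>tauP P. x \<in> U \<and> y \<notin> U \<and> y \<in> V \<and> x \<notin> V)"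
proof (intro allI impI)
  fix x y :: 'a assume "x \<noteq> y"
  have "\<And>a b t. t > 0 \<Longrightarrow> P a b t \<ge> 0" "\<And>a b. (\<forall>t>0. P a b t = 0) \<longleftrightarrow> a = b"
    using assms(1) unfolding gen_param_metric_def by simp_all
  then have Compl_open: "- {z} \<in> tauP P" for z
    by (rule Compl_singleton_in_tauP)
  show "\<exists>U\<in>tauP P. \<exists>V\<in>tauP P. x \<in> U \<and> y \<notin> U \<and> y \<in> V \<and> x \<notin> V"
    using \<open>x \<noteq> y\<close> by (intro bexI[OF _ Compl_open[of y]] bexI[OF _ Compl_open[of x]]) simp
qed

end
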